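(* Let $\mathcal{M}=\mathcal{M}_{3,3}$ and for $p\in\Delta_7$ let $D(p\|\mathcal{M})=\min_{q\in\mathcal{M}}D(p\|q)$. Then $\max_{p\in\Delta_7}D(p\|\mathcal{M})=\tfrac12\log2$, and the maximum is attained exactly at $u^+=\tfrac14(\delta_{000}+\delta_{011}+\delta_{101}+\delta_{110})$ and $u^-=\tfrac14(\delta_{001}+\delta_{010}+\delta_{100}+\delta_{111})$. Moreover the set of minimizers of $D(u^+\|q)$ over $q\in\mathcal{M}$ consists of exactly the six distributions $\tfrac18(\delta_{000}+\delta_{001}+\delta_{010}+\delta_{011})+\tfrac14(\delta_{101}+\delta_{110})$, $\tfrac18(\delta_{100}+\delta_{101}+\delta_{110}+\delta_{111})+\tfrac14(\delta_{011}+\delta_{000})$, $\tfrac18(\delta_{000}+\delta_{001}+\delta_{100}+\delta_{101})+\tfrac14(\delta_{011}+\delta_{110})$, $\tfrac18(\delta_{010}+\delta_{011}+\delta_{110}+\delta_{111})+\tfrac14(\delta_{000}+\delta_{101})$, $\tfrac18(\delta_{000}+\delta_{010}+\delta_{100}+\delta_{110})+\tfrac14(\delta_{011}+\delta_{101})$, $\tfrac18(\delta_{001}+\delta_{011}+\delta_{101}+\delta_{111})+\tfrac14(\delta_{000}+\delta_{110})$, one lying in each of the six sets $\{q\in\Delta_7: d_{i,j}(q)=0\}$; the minimizers for $u^-$ are given analogously.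
   Context: $\Delta_7$ is the set of $2\times2\times2$ tensors $p=(p_{ijk})$ with nonnegative entries summing to $1$; $\delta_x$ denotes the point mass at $x\in\{0,1\}^3$. $\mathcal{M}_{3,3}$ is the set of $p\in\Delta_7$ that are a sum of three tensors $a\otimes b\otimes c$ (entries $a_ib_jc_k$) with $a,b,c\in\mathbb{R}^2_{\ge0}$. The Kullback–Leibler divergence is $D(p\|q)=\sum_x p_x\log(p_x/q_x)$ with $0\log(0/q)=0$ and value $+\infty$ if $p_x>0=q_x$ for some $x$. The slice determinants are $d_{1,0}=p_{000}p_{011}-p_{001}p_{010}$, $d_{1,1}=p_{100}p_{111}-p_{101}p_{110}$, $d_{2,0}=p_{000}p_{101}-p_{001}p_{100}$, $d_{2,1}=p_{010}p_{111}-p_{011}p_{110}$, $d_{3,0}=p_{000}p_{110}-p_{010}p_{100}$, $d_{3,1}=p_{001}p_{111}-p_{011}p_{101}$. *)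

theory Defs
  imports "HOL-Analysis.Analysis"
begin

text \<open>A 2x2x2 tensor is a function on triples of bits; the bit 0 is False, 1 is True.
  So p (False,True,True) is the entry p_011.\<close>

type_synonym tensor = "bool \<times> bool \<times> bool \<Rightarrow> real"

definition simplex7 :: "tensor set" where
  "simplex7 = {p. (\<forall>x. 0 \<le> p x) \<and> (\<Sum>x\<in>UNIV. p x) = 1}"

definition M33 :: "tensor set" where
  "M33 = {p \<in> simplex7. \<exists>a b c :: nat \<Rightarrow> bool \<Rightarrow> real.
      (\<forall>r i. 0 \<le> a r i \<and> 0 \<le> b r i \<and> 0 \<le> c r i) \<and>
      (\<forall>i j k. p (i, j, k) = (\<Sum>r<3. a r i * b r j * c r k))}"

definition KL :: "tensor \<Rightarrow> tensor \<Rightarrow> ereal" where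
  "KL p q = (if \<exists>x. p x > 0 \<and> q x = 0 then \<infinity>
             else ereal (\<Sum>x\<in>UNIV. if p x = 0 then 0 else p x * ln (p x / q x)))"

definition KL_model :: "tensor \<Rightarrow> ereal" where
  "KL_model p = (INF q\<in>M33. KL p q)"

definition slice_det :: "nat \<Rightarrow> bool \<Rightarrow> tensor \<Rightarrow> real" where
  "slice_det m j p =
    (if m = 1 then p (j,False,False) * p (j,True,True) - p (j,False,True) * p (j,True,False)
     else if m = 2 then p (False,j,False) * p (True,j,True) - p (False,j,True) * p (True,j,False)
     else p (False,False,j) * p (True,True,j) - p (False,True,j) * p (True,False,j))"

definition u_plus :: tensor where
  "u_plus = (\<lambda>x. if x \<in> {(False,False,False),(False,True,True),(True,False,True),(True,True,False)}
                 then 1/4 else 0)"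

definition u_minus :: tensor where
  "u_minus = (\<lambda>x. if x \<in> {(False,False,True),(False,True,False),(True,False,False),(True,True,True)}
                 then 1/4 else 0)"

definition mix :: "(bool \<times> bool \<times> bool) set \<Rightarrow> (bool \<times> bool \<times> bool) set \<Rightarrow> tensor" where
  "mix A B = (\<lambda>x. if x \<in> A then 1/8 else if x \<in> B then 1/4 else 0)"

definition q10 :: tensor where
  "q10 = mix {(False,False,False),(False,False,True),(False,True,False),(False,True,True)}
             {(True,False,True),(True,True,False)}"
definition q11 :: tensor where
  "q11 = mix {(True,False,False),(True,False,True),(True,True,False),(True,True,True)}
             {(False,True,True),(False,False,False)}"
definition q20 :: tensor where
  "q20 = mix {(False,False,False),(False,False,True),(True,False,False),(True,False,True)}
             {(False,True,True),(True,True,False)}"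
definition q21 :: tensor where
  "q21 = mix {(False,True,False),(False,True,True),(True,True,False),(True,True,True)}
             {(False,False,False),(True,False,True)}"
definition q30 :: tensor where
  "q30 = mix {(False,False,False),(False,True,False),(True,False,False),(True,True,False)}
             {(False,True,True),(True,False,True)}"
definition q31 :: tensor where
  "q31 = mix {(False,False,True),(False,True,True),(True,False,True),(True,True,True)}
             {(False,False,False),(True,True,False)}"

text \<open>Flipping the first index; it maps u_plus to u_minus and preserves M33 and KL.\<close>
definition flip1 :: "tensor \<Rightarrow> tensor" where
  "flip1 q = (\<lambda>(i, j, k). q (\<not> i, j, k))"

end

theory Submission
  imports Defs
begin

text \<open>
  Replacing the slice p(i,-,-) by the product of its two marginals gives a point of
  M33 (one rank-one term for the new slice, two for the other one), and the divergence from p to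
  it is the mutual information of that slice, at most its mass times log 2. The lighter slice has
  mass at most 1/2. Equality forces both slices to have mass 1/2 and to be perfectly correlated;
  of the four such distributions two lie in M33, the other two are u_plus and u_minus.

  D(u_plus || q) = -2 log 2 - (log q000 + log q011 + log q101 + log q110)/4.
  For q in M33 the six slice determinants cannot have the signs they have at u_plus: along the
  pencil q(1,-,-) - t q(0,-,-) the determinant is a convex quadratic that stays negative up to the
  smallest ratio t of a rank-one term, and by Cauchy-Binet this orders the three rank-one terms in
  a way that contradicts the remaining sign conditions. So some slice determinant has the wrong
  sign, and AM-GM bounds q000 q011 q101 q110 by 1/1024, with equality only at the corresponding
  q_ij. Flipping the first index transfers everything to u_minus.
\<close>

lemma UNIV_cube: "(UNIV :: (bool \<times> bool \<times> bool) set) =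
  {(False,False,False), (False,False,True), (False,True,False), (False,True,True),
   (True,False,False), (True,False,True), (True,True,False), (True,True,True)}"
  by (auto; case_tac a; case_tac aa; case_tac b; auto)

lemma sum_cube: "(\<Sum>x\<in>UNIV. f x) =
  f (False,False,False) + f (False,False,True) + f (False,True,False) + f (False,True,True) +
  f (True,False,False) + f (True,False,True) + f (True,True,False) + (f (True,True,True) :: real)"
  by (simp add: UNIV_cube add.assoc)

lemma ex_cube: "(\<exists>x :: bool \<times> bool \<times> bool. P x) \<longleftrightarrow>
  P (False,False,False) \<or> P (False,False,True) \<or> P (False,True,False) \<or> P (False,True,True) \<or>
  P (True,False,False) \<or> P (True,False,True) \<or> P (True,True,False) \<or> P (True,True,True)"
  by (metis UNIV_I UNIV_cube empty_iff insert_iff)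

lemma tensor_eqI:
  fixes p q :: tensor
  assumes "p (False,False,False) = q (False,False,False)" "p (False,False,True) = q (False,False,True)"
    "p (False,True,False) = q (False,True,False)" "p (False,True,True) = q (False,True,True)"
    "p (True,False,False) = q (True,False,False)" "p (True,False,True) = q (True,False,True)"
    "p (True,True,False) = q (True,True,False)" "p (True,True,True) = q (True,True,True)"
  shows "p = q"
proof
  fix x :: "bool \<times> bool \<times> bool"
  show "p x = q x" using assms UNIV_I[of x] unfolding UNIV_cube by auto
qed

lemma simplex7_nonneg: "p \<in> simplex7 \<Longrightarrow> 0 \<le> p x"
  by (cases x) (simp add: simplex7_def)

lemma simplex7_sum: "p \<in> simplex7 \<Longrightarrow>
  p (False,False,False) + p (False,False,True) + p (False,True,False) + p (False,True,True) +
  p (True,False,False) + p (True,False,True) + p (True,True,False) + p (True,True,True) = 1"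
  by (simp add: simplex7_def sum_cube)

definition cp3 :: "(nat \<Rightarrow> bool \<Rightarrow> real) \<Rightarrow> (nat \<Rightarrow> bool \<Rightarrow> real) \<Rightarrow> (nat \<Rightarrow> bool \<Rightarrow> real) \<Rightarrow> tensor" where
  "cp3 a b c = (\<lambda>(i, j, k). \<Sum>r<3. a r i * b r j * c r k)"

definition nonneg_factors :: "(nat \<Rightarrow> bool \<Rightarrow> real) \<Rightarrow> (nat \<Rightarrow> bool \<Rightarrow> real) \<Rightarrow> (nat \<Rightarrow> bool \<Rightarrow> real) \<Rightarrow> bool" where
  "nonneg_factors a b c \<longleftrightarrow> (\<forall>r i. 0 \<le> a r i \<and> 0 \<le> b r i \<and> 0 \<le> c r i)"

lemma sum_lessThan_3: "(\<Sum>r<3::nat. f r) = f 0 + f 1 + (f 2 :: real)"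
  by (simp add: eval_nat_numeral)

lemma cp3_apply: "cp3 a b c (i, j, k) = a 0 i * b 0 j * c 0 k + a 1 i * b 1 j * c 1 k + a 2 i * b 2 j * c 2 k"
  by (simp add: cp3_def sum_lessThan_3)

lemma M33_iff: "p \<in> M33 \<longleftrightarrow> p \<in> simplex7 \<and> (\<exists>a b c. nonneg_factors a b c \<and> p = cp3 a b c)"
  unfolding M33_def nonneg_factors_def cp3_def by (auto simp: fun_eq_iff)

lemma cp3_nonneg: "nonneg_factors a b c \<Longrightarrow> 0 \<le> cp3 a b c x"
  by (cases x) (simp add: cp3_apply nonneg_factors_def)

definition minor2 :: "(nat \<Rightarrow> bool \<Rightarrow> real) \<Rightarrow> nat \<Rightarrow> nat \<Rightarrow> real" where
  "minor2 f u v = f u False * f v True - f u True * f v False"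

lemma det2_sum3:
  fixes w :: "nat \<Rightarrow> real" and f g :: "nat \<Rightarrow> bool \<Rightarrow> real"
  defines "e j k \<equiv> \<Sum>r<3. w r * f r j * g r k"
  shows "e False False * e True True - e False True * e True False =
    w 0 * w 1 * (minor2 f 0 1 * minor2 g 0 1) + w 0 * w 2 * (minor2 f 0 2 * minor2 g 0 2) +
    w 1 * w 2 * (minor2 f 1 2 * minor2 g 1 2)"
  unfolding e_def sum_lessThan_3 minor2_def by algebra

lemma slice_det_cp3:
  "slice_det 1 i (cp3 a b c) = a 0 i * a 1 i * (minor2 b 0 1 * minor2 c 0 1) +
     a 0 i * a 2 i * (minor2 b 0 2 * minor2 c 0 2) + a 1 i * a 2 i * (minor2 b 1 2 * minor2 c 1 2)"
    (is "_ = ?d1")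
  "slice_det 2 j (cp3 a b c) = b 0 j * b 1 j * (minor2 a 0 1 * minor2 c 0 1) +
     b 0 j * b 2 j * (minor2 a 0 2 * minor2 c 0 2) + b 1 j * b 2 j * (minor2 a 1 2 * minor2 c 1 2)"
    (is "_ = ?d2")
  "slice_det 3 k (cp3 a b c) = c 0 k * c 1 k * (minor2 a 0 1 * minor2 b 0 1) +
     c 0 k * c 2 k * (minor2 a 0 2 * minor2 b 0 2) + c 1 k * c 2 k * (minor2 a 1 2 * minor2 b 1 2)"
    (is "_ = ?d3")
proof -
  have "cp3 a b c (i', j, k') = (\<Sum>r<3. b r j * a r i' * c r k')"
   and "cp3 a b c (i', j', k) = (\<Sum>r<3. c r k * a r i' * b r j')" for i' j' k'
    by (simp_all add: cp3_def mult_ac)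
  then show "slice_det 1 i (cp3 a b c) = ?d1" "slice_det 2 j (cp3 a b c) = ?d2" "slice_det 3 k (cp3 a b c) = ?d3"
    using det2_sum3[of "\<lambda>r. a r i" b c] det2_sum3[of "\<lambda>r. b r j" a c] det2_sum3[of "\<lambda>r. c r k" a b]
    by (simp_all add: slice_det_def cp3_def)
qed

definition of_three :: "'a \<Rightarrow> 'a \<Rightarrow> 'a \<Rightarrow> nat \<Rightarrow> 'a" where
  "of_three f0 f1 f2 r = (if r = 0 then f0 else if r = 1 then f1 else f2)"

lemma nonneg_factors_of_three:
  "nonneg_factors (of_three a0 a1 a2) (of_three b0 b1 b2) (of_three c0 c1 c2) \<longleftrightarrow>
    (\<forall>i. 0 \<le> a0 i \<and> 0 \<le> a1 i \<and> 0 \<le> a2 i \<and> 0 \<le> b0 i \<and> 0 \<le> b1 i \<and> 0 \<le> b2 i \<and>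
      0 \<le> c0 i \<and> 0 \<le> c1 i \<and> 0 \<le> c2 i)"
  by (auto simp: nonneg_factors_def of_three_def)

lemma cp3_in_M33: "cp3 a b c \<in> simplex7 \<Longrightarrow> nonneg_factors a b c \<Longrightarrow> cp3 a b c \<in> M33"
  by (auto simp: M33_iff)

text \<open>The sign pattern of the slice determinants of u_plus: each slice at index 0 has
  determinant 1/16, each slice at index 1 has determinant -1/16.\<close>
definition alternating_dets :: "tensor \<Rightarrow> bool" where
  "alternating_dets q \<longleftrightarrow> (\<forall>m\<in>{1,2,3}. 0 < slice_det m False q \<and> slice_det m True q < 0)"

lemma quadratic_neg_between:
  fixes \<alpha> \<beta> \<gamma> t M :: real
  assumes "0 \<le> \<alpha>" "\<gamma> < 0" "\<gamma> + \<beta> * M + \<alpha> * M\<^sup>2 < 0" "0 \<le> t" "t \<le> M"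
  shows "\<gamma> + \<beta> * t + \<alpha> * t\<^sup>2 < 0"
proof (cases "t = 0")
  case False
  then have "0 < t" "0 < M" using assms by linarith+
  \<comment> \<open>convexity: the value at t is below the chord through 0 and M\<close>
  have "M * (\<gamma> + \<beta> * t + \<alpha> * t\<^sup>2) = (M - t) * \<gamma> + t * (\<gamma> + \<beta> * M + \<alpha> * M\<^sup>2) - \<alpha> * t * (M - t) * M"
    by (simp add: power2_eq_square algebra_simps)
  also have "\<dots> < 0"
  proof -
    have "0 \<le> \<alpha> * t * (M - t) * M" using assms \<open>0 < t\<close> \<open>0 < M\<close> by simp
    moreover have "(M - t) * \<gamma> \<le> 0" "t * (\<gamma> + \<beta> * M + \<alpha> * M\<^sup>2) < 0"
      using assms \<open>0 < t\<close> by (simp_all add: mult_nonneg_nonpos mult_pos_neg)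
    ultimately show ?thesis by linarith
  qed
  finally show ?thesis using \<open>0 < M\<close> by (simp add: mult_less_0_iff)
qed (use assms in simp)

lemma ratio_gap_pos:
  fixes d M n e f :: real
  assumes "0 < d" "M * d = n" "e * n < d * f"
  shows "0 < f - M * e"
proof -
  have "(f - M * e) * d = d * f - e * n" by (subst assms(2)[symmetric]) (simp add: algebra_simps)
  then have "0 < (f - M * e) * d" using assms(3) by simp
  then show ?thesis using assms(1) by (simp add: zero_less_mult_iff)
qed

lemma alternating_pencil_det_neg:
  fixes q :: tensor and t :: real
  assumes nonneg: "\<And>x. 0 \<le> q x" and alt: "alternating_dets q"
    and t: "0 \<le> t" "t * q (False,False,False) \<le> q (True,False,False)"
  shows "(q (True,False,False) - t * q (False,False,False)) * (q (True,True,True) - t * q (False,True,True))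
       - (q (True,False,True) - t * q (False,False,True)) * (q (True,True,False) - t * q (False,True,False)) < 0"
proof -
  define g where "g s = (q (True,False,False) - s * q (False,False,False)) * (q (True,True,True) - s * q (False,True,True))
       - (q (True,False,True) - s * q (False,False,True)) * (q (True,True,False) - s * q (False,True,False))" for s
  have d: "0 < slice_det 1 False q" "slice_det 1 True q < 0" "0 < slice_det 2 False q"
    "slice_det 2 True q < 0" "0 < slice_det 3 False q" "slice_det 3 True q < 0"
    using alt by (simp_all add: alternating_dets_def)
  then have d': "q (False,False,True) * q (False,True,False) < q (False,False,False) * q (False,True,True)"
    "q (True,False,False) * q (True,True,True) < q (True,False,True) * q (True,True,False)"
    "q (False,False,True) * q (True,False,False) < q (False,False,False) * q (True,False,True)"
    "q (False,True,False) * q (True,True,True) < q (False,True,True) * q (True,True,False)"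
    "q (False,True,False) * q (True,False,False) < q (False,False,False) * q (True,True,False)"
    "q (False,False,True) * q (True,True,True) < q (False,True,True) * q (True,False,True)"
    by (simp_all add: slice_det_def)
  have quadratic: "g s = slice_det 1 True q
      + (q (False,True,False) * q (True,False,True) + q (False,False,True) * q (True,True,False)
         - q (True,False,False) * q (False,True,True) - q (False,False,False) * q (True,True,True)) * s
      + slice_det 1 False q * s\<^sup>2" for s
    by (simp add: g_def slice_det_def power2_eq_square algebra_simps)
  have "0 < q (False,False,False) * q (False,True,True)"
    using d'(1) mult_nonneg_nonneg[OF nonneg nonneg, of "(False,False,True)" "(False,True,False)"] by linarith
  then have q000: "0 < q (False,False,False)" and q011: "0 < q (False,True,True)"
    using nonneg[of "(False,False,False)"] nonneg[of "(False,True,True)"] by (auto simp: zero_less_mult_iff)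
  define M where "M = max (q (True,False,False) / q (False,False,False)) (q (True,True,True) / q (False,True,True))"
  have "t \<le> M" using t q000 by (simp add: M_def le_divide_eq le_max_iff_disj)
  \<comment> \<open>at t = M one diagonal entry of the pencil vanishes and both off-diagonal ones are positive\<close>
  have "g M < 0"
  proof (cases "q (True,True,True) / q (False,True,True) \<le> q (True,False,False) / q (False,False,False)")
    case True
    then have M: "M * q (False,False,False) = q (True,False,False)" using q000 by (simp add: M_def)
    have "0 < q (True,False,True) - M * q (False,False,True)" "0 < q (True,True,False) - M * q (False,True,False)"
      using ratio_gap_pos[OF q000 M] d'(3,5) by simp_all
    then show ?thesis using M by (simp add: g_def)
  next
    case False
    then have M: "M * q (False,True,True) = q (True,True,True)" using q011 by (simp add: M_def)
    have "0 < q (True,False,True) - M * q (False,False,True)" "0 < q (True,True,False) - M * q (False,True,False)"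
      using ratio_gap_pos[OF q011 M] d'(6,4) by simp_all
    then show ?thesis using M by (simp add: g_def)
  qed
  then have "g t < 0"
    unfolding quadratic by (rule quadratic_neg_between[rotated 2]) (use d t \<open>t \<le> M\<close> in simp_all)
  then show ?thesis by (simp add: g_def)
qed

lemma minor2_swap_mult: "minor2 f v u * minor2 g v u = minor2 f u v * minor2 g u v"
  by (simp add: minor2_def algebra_simps)

lemma less_3_cases: "(r::nat) < 3 \<longleftrightarrow> r = 0 \<or> r = 1 \<or> r = 2"
  by auto

lemma pos_factors_of_neg_product:
  fixes x y m :: real
  assumes "0 \<le> x" "0 \<le> y" "x * y * m < 0"
  shows "0 < x" "0 < y" "m < 0"
  using assms by (auto simp: mult_less_0_iff zero_less_mult_iff)

text \<open>With \<sigma> the least ratio a r True / a r False, the pencil q(1,-,-) - \<sigma> q(0,-,-) is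
  \<Sum>s. x s (b s \<otimes> c s) with all x s \<ge> 0 and x r = 0. Its determinant is negative, and by
  Cauchy-Binet it is the single term x u x v (minor b u v) (minor c u v) of the other two indices.\<close>
lemma pencil_min_ratio:
  assumes nn: "nonneg_factors a b c" and alt: "alternating_dets (cp3 a b c)"
    and r: "r < 3" "0 < a r False" "\<forall>s<3. a r True * a s False \<le> a s True * a r False"
  shows "\<forall>s<3. s \<noteq> r \<longrightarrow> 0 < minor2 a r s"
    and "\<forall>u<3. \<forall>v<3. u \<noteq> r \<longrightarrow> v \<noteq> r \<longrightarrow> u \<noteq> v \<longrightarrow> minor2 b u v * minor2 c u v < 0"
proof -
  define q where "q = cp3 a b c"
  define \<sigma> where "\<sigma> = a r True / a r False"
  define x where "x s = a s True - \<sigma> * a s False" for s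
  have ar: "a r True = \<sigma> * a r False" using r(2) by (simp add: \<sigma>_def)
  have "x r = 0" using ar by (simp add: x_def)
  have x_nonneg: "0 \<le> x s" if "s < 3" for s
  proof -
    have "a r True * a s False \<le> a s True * a r False" using r(3) that by blast
    then have "\<sigma> * a s False * a r False \<le> a s True * a r False" by (simp add: ar mult_ac)
    then show ?thesis using r(2) by (simp add: x_def)
  qed
  have pencil: "q (True,j,k) - \<sigma> * q (False,j,k) = (\<Sum>s<3. x s * b s j * c s k)" for j k
    by (simp add: q_def cp3_apply sum_lessThan_3 x_def algebra_simps)
  have "0 \<le> \<sigma>" using nn r(2) by (simp add: \<sigma>_def nonneg_factors_def)
  have "0 \<le> (\<Sum>s<3. x s * b s False * c s False)"
    using x_nonneg nn by (intro sum_nonneg) (simp add: nonneg_factors_def)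
  then have "\<sigma> * q (False,False,False) \<le> q (True,False,False)"
    using pencil[of False False] by linarith
  then have "(q (True,False,False) - \<sigma> * q (False,False,False)) * (q (True,True,True) - \<sigma> * q (False,True,True))
       - (q (True,False,True) - \<sigma> * q (False,False,True)) * (q (True,True,False) - \<sigma> * q (False,True,False)) < 0"
    using alternating_pencil_det_neg[OF _ _ \<open>0 \<le> \<sigma>\<close>] alt cp3_nonneg[OF nn] by (simp add: q_def)
  then have pairs: "x 0 * x 1 * (minor2 b 0 1 * minor2 c 0 1) + x 0 * x 2 * (minor2 b 0 2 * minor2 c 0 2)
      + x 1 * x 2 * (minor2 b 1 2 * minor2 c 1 2) < 0"
    unfolding pencil det2_sum3 .
  then obtain u v where uv: "\<forall>s<3. s = r \<or> s = u \<or> s = v" "u < 3" "v < 3" "u \<noteq> r" "v \<noteq> r" "u \<noteq> v"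
    and neg: "x u * x v * (minor2 b u v * minor2 c u v) < 0"
  proof -
    consider "r = 0" | "r = 1" | "r = 2" using r(1) by linarith
    then show thesis
    proof cases
      case 1 then show thesis using that[of 1 2] \<open>x r = 0\<close> pairs by (simp add: less_3_cases)
    next
      case 2 then show thesis using that[of 0 2] \<open>x r = 0\<close> pairs by (simp add: less_3_cases)
    next
      case 3 then show thesis using that[of 0 1] \<open>x r = 0\<close> pairs by (simp add: less_3_cases)
    qed
  qed
  have "0 < x u" "0 < x v" "minor2 b u v * minor2 c u v < 0"
    using pos_factors_of_neg_product[OF x_nonneg x_nonneg neg] uv by auto
  then have "(\<forall>s<3. s \<noteq> r \<longrightarrow> 0 < x s) \<and>
      (\<forall>u'<3. \<forall>v'<3. u' \<noteq> r \<longrightarrow> v' \<noteq> r \<longrightarrow> u' \<noteq> v' \<longrightarrow> minor2 b u' v' * minor2 c u' v' < 0)"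
    using uv minor2_swap_mult by metis
  moreover have "minor2 a r s = a r False * x s" for s
    by (simp add: minor2_def x_def ar algebra_simps)
  ultimately show "\<forall>s<3. s \<noteq> r \<longrightarrow> 0 < minor2 a r s"
    and "\<forall>u<3. \<forall>v<3. u \<noteq> r \<longrightarrow> v \<noteq> r \<longrightarrow> u \<noteq> v \<longrightarrow> minor2 b u v * minor2 c u v < 0"
    using r(2) by auto
qed

definition flip_bool :: "(nat \<Rightarrow> bool \<Rightarrow> real) \<Rightarrow> nat \<Rightarrow> bool \<Rightarrow> real" where
  "flip_bool f r i = f r (\<not> i)"

lemma alternating_dets_flip_bool:
  "alternating_dets (cp3 a b c) \<Longrightarrow> alternating_dets (cp3 (flip_bool a) (flip_bool b) c)"
  by (simp add: alternating_dets_def slice_det_def cp3_def flip_bool_def algebra_simps)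

lemma pencil_max_ratio:
  assumes nn: "nonneg_factors a b c" and alt: "alternating_dets (cp3 a b c)"
    and r: "r < 3" "0 < a r True" "\<forall>s<3. a r False * a s True \<le> a s False * a r True"
  shows "\<forall>s<3. s \<noteq> r \<longrightarrow> 0 < minor2 a s r"
    and "\<forall>u<3. \<forall>v<3. u \<noteq> r \<longrightarrow> v \<noteq> r \<longrightarrow> u \<noteq> v \<longrightarrow> 0 < minor2 b u v * minor2 c u v"
proof -
  have "nonneg_factors (flip_bool a) (flip_bool b) c"
    using nn by (simp add: nonneg_factors_def flip_bool_def)
  note flipped = pencil_min_ratio[OF this alternating_dets_flip_bool[OF alt] r(1)]
  have "minor2 (flip_bool a) r s = minor2 a s r" for s
    by (simp add: minor2_def flip_bool_def algebra_simps)
  moreover have "minor2 (flip_bool b) u v * minor2 c u v = - (minor2 b u v * minor2 c u v)" for u v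
    by (simp add: minor2_def flip_bool_def algebra_simps)
  ultimately show "\<forall>s<3. s \<noteq> r \<longrightarrow> 0 < minor2 a s r"
    and "\<forall>u<3. \<forall>v<3. u \<noteq> r \<longrightarrow> v \<noteq> r \<longrightarrow> u \<noteq> v \<longrightarrow> 0 < minor2 b u v * minor2 c u v"
    using flipped r(2,3) by (simp_all add: flip_bool_def)
qed

text \<open>For vectors in the closed first quadrant, "strictly counterclockwise of" is transitive.\<close>
lemma det2_pos_trans:
  fixes u0 u1 v0 v1 w0 w1 :: real
  assumes nn: "0 \<le> u0" "0 \<le> u1" "0 \<le> v0" "0 \<le> v1" "0 \<le> w0" "0 \<le> w1"
    and uv: "0 < u0 * v1 - u1 * v0" and vw: "0 < v0 * w1 - v1 * w0"
  shows "0 < u0 * w1 - u1 * w0"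
proof (rule ccontr)
  assume "\<not> ?thesis"
  then have uw: "u0 * w1 - u1 * w0 \<le> 0" by simp
  have "(u0 * w1 - u1 * w0) * v0 = (u0 * v1 - u1 * v0) * w0 + (v0 * w1 - v1 * w0) * u0"
   and "(u0 * w1 - u1 * w0) * v1 = (u0 * v1 - u1 * v0) * w1 + (v0 * w1 - v1 * w0) * u1"
    by algebra+
  moreover have "(u0 * w1 - u1 * w0) * v0 \<le> 0" "(u0 * w1 - u1 * w0) * v1 \<le> 0"
    using uw nn by (simp_all add: mult_nonpos_nonneg)
  moreover have "0 \<le> (u0 * v1 - u1 * v0) * w0" "0 \<le> (u0 * v1 - u1 * v0) * w1"
    "0 \<le> (v0 * w1 - v1 * w0) * u0" "0 \<le> (v0 * w1 - v1 * w0) * u1"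
    using uv vw nn by simp_all
  ultimately have "(v0 * w1 - v1 * w0) * u0 = 0" "(v0 * w1 - v1 * w0) * u1 = 0" by linarith+
  then show False using uv vw by simp
qed

lemma minor2_pos_trans:
  assumes "\<forall>r i. 0 \<le> f r i" "0 < minor2 f 0 1" "0 < minor2 f 1 2"
  shows "0 < minor2 f 0 2"
  using det2_pos_trans[of "f 0 False" "f 0 True" "f 1 False" "f 1 True" "f 2 False" "f 2 True"] assms
  by (simp add: minor2_def)

lemma minor2_neg_trans:
  assumes "\<forall>r i. 0 \<le> f r i" "minor2 f 0 1 < 0" "minor2 f 1 2 < 0"
  shows "minor2 f 0 2 < 0"
  using det2_pos_trans[of "f 2 False" "f 2 True" "f 1 False" "f 1 True" "f 0 False" "f 0 True"] assms
  by (simp add: minor2_def algebra_simps)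

lemma not_alternating_of_ordered_minors:
  assumes nn: "nonneg_factors a b c"
    and a: "0 < minor2 a 0 1" "0 < minor2 a 0 2" "0 < minor2 a 1 2"
    and bc: "minor2 b 1 2 * minor2 c 1 2 < 0" "0 < minor2 b 0 1 * minor2 c 0 1"
  shows "\<not> alternating_dets (cp3 a b c)"
proof
  assume "alternating_dets (cp3 a b c)"
  then have d: "0 < slice_det 2 False (cp3 a b c)" "slice_det 2 True (cp3 a b c) < 0"
    "0 < slice_det 3 False (cp3 a b c)" "slice_det 3 True (cp3 a b c) < 0"
    by (simp_all add: alternating_dets_def)
  have b: "\<forall>r i. 0 \<le> b r i" and c: "\<forall>r i. 0 \<le> c r i"
    using nn by (simp_all add: nonneg_factors_def)
  have bc12: "0 < minor2 b 1 2 \<and> minor2 c 1 2 < 0 \<or> minor2 b 1 2 < 0 \<and> 0 < minor2 c 1 2"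
    using bc(1) by (auto simp: mult_less_0_iff)
  consider (pos) "0 < minor2 b 0 1" "0 < minor2 c 0 1" | (neg) "minor2 b 0 1 < 0" "minor2 c 0 1 < 0"
    using bc(2) by (auto simp: zero_less_mult_iff)
  then show False
  proof cases
    case pos
    from bc12 show False
    proof (elim disjE conjE)
      assume "0 < minor2 b 1 2" "minor2 c 1 2 < 0"
      then have "0 \<le> slice_det 3 True (cp3 a b c)"
        using pos minor2_pos_trans[OF b] a b c unfolding slice_det_cp3
        by (intro add_nonneg_nonneg mult_nonneg_nonneg) simp_all
      then show False using d by simp
    next
      assume "minor2 b 1 2 < 0" "0 < minor2 c 1 2"
      then have "0 \<le> slice_det 2 True (cp3 a b c)"
        using pos minor2_pos_trans[OF c] a b c unfolding slice_det_cp3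
        by (intro add_nonneg_nonneg mult_nonneg_nonneg) simp_all
      then show False using d by simp
    qed
  next
    case neg
    from bc12 show False
    proof (elim disjE conjE)
      assume "0 < minor2 b 1 2" "minor2 c 1 2 < 0"
      then have "slice_det 2 False (cp3 a b c) \<le> 0"
        using neg minor2_neg_trans[OF c] a b c unfolding slice_det_cp3
        by (intro add_nonpos_nonpos mult_nonneg_nonpos) (simp_all add: mult_pos_neg)
      then show False using d by simp
    next
      assume "minor2 b 1 2 < 0" "0 < minor2 c 1 2"
      then have "slice_det 3 False (cp3 a b c) \<le> 0"
        using neg minor2_neg_trans[OF b] a b c unfolding slice_det_cp3
        by (intro add_nonpos_nonpos mult_nonneg_nonpos) (simp_all add: mult_pos_neg)
      then show False using d by simp
    qed
  qed
qed

lemma ex_min_ratio: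
  fixes x y :: "'a \<Rightarrow> real"
  assumes S: "finite S" and nonneg: "\<forall>r\<in>S. 0 \<le> x r" "\<forall>r\<in>S. 0 \<le> y r" and pos: "\<exists>r\<in>S. 0 < x r"
  shows "\<exists>r\<in>S. 0 < x r \<and> (\<forall>s\<in>S. y r * x s \<le> y s * x r)"
proof -
  define P where "P = {r\<in>S. 0 < x r}"
  have "finite P" "P \<noteq> {}" using S pos by (auto simp: P_def)
  then obtain r where r: "r \<in> P" and min: "\<forall>s\<in>P. y r / x r \<le> y s / x s"
    using arg_min_if_finite[of P "\<lambda>r. y r / x r"] by (metis not_less)
  have "y r * x s \<le> y s * x r" if "s \<in> S" for s
  proof (cases "0 < x s")
    case True
    then show ?thesis using min r that by (auto simp: P_def divide_simps mult.commute)
  next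
    case False
    then have "x s = 0" using nonneg that by force
    then show ?thesis using nonneg that r by (simp add: P_def)
  qed
  then show ?thesis using r by (auto simp: P_def)
qed

lemma cp3_reindex:
  assumes "bij_betw \<pi> {..<3} {..<3}"
  shows "cp3 (\<lambda>r. a (\<pi> r)) (\<lambda>r. b (\<pi> r)) (\<lambda>r. c (\<pi> r)) = cp3 a b c"
proof -
  have "(\<Sum>r<3. a (\<pi> r) i * b (\<pi> r) j * c (\<pi> r) k) = (\<Sum>r<3. a r i * b r j * c r k)" for i j k
    using sum.reindex_bij_betw[OF assms, of "\<lambda>r. a r i * b r j * c r k"] by simp
  then show ?thesis by (simp add: cp3_def)
qed

lemma not_alternating_of_extreme_ratios:
  assumes nn: "nonneg_factors a b c"
    and lo: "lo < 3" "0 < a lo False" "\<forall>s<3. a lo True * a s False \<le> a s True * a lo False"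
    and hi: "hi < 3" "0 < a hi True" "\<forall>s<3. a hi False * a s True \<le> a s False * a hi True"
  shows "\<not> alternating_dets (cp3 a b c)"
proof
  assume alt: "alternating_dets (cp3 a b c)"
  note min = pencil_min_ratio[OF nn alt lo] and max = pencil_max_ratio[OF nn alt hi]
  have "lo \<noteq> hi"
  proof
    assume "lo = hi"
    have "\<exists>u<3. \<exists>v<3. u \<noteq> lo \<and> v \<noteq> lo \<and> u \<noteq> v" by presburger
    then obtain u v where "u < 3" "v < 3" "u \<noteq> lo" "v \<noteq> lo" "u \<noteq> v" by blast
    then show False using min(2) max(2) \<open>lo = hi\<close> by force
  qed
  \<comment> \<open>relabel the three terms in the order lo, mid, hi of the ratios a r True / a r False\<close>
  define mid where "mid = 3 - lo - hi"
  define \<pi> where "\<pi> r = (if r = 0 then lo else if r = 1 then mid else hi)" for r :: nat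
  have mid: "mid < 3" "mid \<noteq> lo" "mid \<noteq> hi" using lo(1) hi(1) \<open>lo \<noteq> hi\<close> unfolding mid_def by presburger+
  have \<pi>: "bij_betw \<pi> {..<3} {..<3}"
    using lo(1) hi(1) mid \<open>lo \<noteq> hi\<close> unfolding bij_betw_def inj_on_def \<pi>_def
    by (auto simp: less_3_cases image_iff)
  show False
  proof (rule notE[OF not_alternating_of_ordered_minors])
    show "nonneg_factors (\<lambda>r. a (\<pi> r)) (\<lambda>r. b (\<pi> r)) (\<lambda>r. c (\<pi> r))"
      using nn by (simp add: nonneg_factors_def)
    show "alternating_dets (cp3 (\<lambda>r. a (\<pi> r)) (\<lambda>r. b (\<pi> r)) (\<lambda>r. c (\<pi> r)))"
      using alt cp3_reindex[OF \<pi>] by simp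
    show "0 < minor2 (\<lambda>r. a (\<pi> r)) 0 1" "0 < minor2 (\<lambda>r. a (\<pi> r)) 0 2" "0 < minor2 (\<lambda>r. a (\<pi> r)) 1 2"
      using min(1) max(1) mid hi(1) \<open>lo \<noteq> hi\<close> by (simp_all add: minor2_def \<pi>_def)
    show "minor2 (\<lambda>r. b (\<pi> r)) 1 2 * minor2 (\<lambda>r. c (\<pi> r)) 1 2 < 0"
      using min(2) mid hi(1) \<open>lo \<noteq> hi\<close> by (simp add: minor2_def \<pi>_def)
    show "0 < minor2 (\<lambda>r. b (\<pi> r)) 0 1 * minor2 (\<lambda>r. c (\<pi> r)) 0 1"
      using max(2) mid lo(1) \<open>lo \<noteq> hi\<close> by (simp add: minor2_def \<pi>_def)
  qed
qed

theorem cp3_not_alternating: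
  assumes nn: "nonneg_factors a b c"
  shows "\<not> alternating_dets (cp3 a b c)"
proof
  assume alt: "alternating_dets (cp3 a b c)"
  have "\<exists>r\<in>{..<3}. 0 < a r i" for i
  proof (rule ccontr)
    assume "\<not> (\<exists>r\<in>{..<3}. 0 < a r i)"
    then have "a r i = 0" if "r < 3" for r using nn that by (meson lessThan_iff nonneg_factors_def not_less order.antisym)
    then have "slice_det 1 i (cp3 a b c) = 0" unfolding slice_det_cp3 by simp
    then show False using alt by (cases i) (simp_all add: alternating_dets_def)
  qed
  moreover have "\<forall>r\<in>{..<3}. 0 \<le> a r i" for i using nn by (simp add: nonneg_factors_def)
  ultimately have "\<exists>r\<in>{..<3}. 0 < a r i \<and> (\<forall>s\<in>{..<3}. a r (\<not> i) * a s i \<le> a s (\<not> i) * a r i)" for i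
    by (intro ex_min_ratio) auto
  then obtain lo hi where
      "lo < 3" "0 < a lo False" "\<forall>s<3. a lo True * a s False \<le> a s True * a lo False"
    and "hi < 3" "0 < a hi True" "\<forall>s<3. a hi False * a s True \<le> a s False * a hi True"
    by (metis (full_types) lessThan_iff)
  then show False using not_alternating_of_extreme_ratios[OF nn] alt by blast
qed

lemma four_mul_le_sq_add: "4 * (x * y) \<le> (x + y)\<^sup>2" for x y :: real
  using zero_le_power2[of "x - y"] by (simp add: power2_eq_square algebra_simps)

lemma four_mul_eq_sq_add_iff: "4 * (x * y) = (x + y)\<^sup>2 \<longleftrightarrow> x = y" for x y :: real
proof -
  have "(x + y)\<^sup>2 - 4 * (x * y) = (x - y)\<^sup>2" by (simp add: power2_eq_square algebra_simps)
  then show ?thesis by auto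
qed

lemma mult_mono_tight:
  fixes P Q p q :: real
  assumes "0 \<le> P" "P \<le> p" "0 \<le> Q" "Q \<le> q" "p * q \<le> P * Q" "0 < P * Q"
  shows "P = p" "Q = q"
proof -
  have "0 < P" "0 < Q" using assms(1,3,6) by (auto simp: zero_less_mult_iff)
  show "P = p"
  proof (rule ccontr)
    assume "P \<noteq> p"
    then have "P * Q < p * Q" using assms(2) \<open>0 < Q\<close> by simp
    also have "\<dots> \<le> p * q" using assms(4) \<open>0 < P\<close> assms(2) by (simp add: mult_left_mono)
    finally show False using assms(5) by simp
  qed
  show "Q = q"
  proof (rule ccontr)
    assume "Q \<noteq> q"
    then have "P * Q < P * q" using assms(4) \<open>0 < P\<close> by simp
    also have "\<dots> \<le> p * q" using assms(2) \<open>0 < Q\<close> assms(4) by (simp add: mult_right_mono)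
    finally show False using assms(5) by simp
  qed
qed

lemma sixteen_mul_le_sq_sum:
  fixes A B X Y :: real
  assumes nn: "0 \<le> A" "0 \<le> B" "0 \<le> X" "0 \<le> Y" and minor: "A * B \<le> X * Y"
  shows "16 * (A * B) \<le> (A + B + X + Y)\<^sup>2"
    and "16 * (A * B) = (A + B + X + Y)\<^sup>2 \<Longrightarrow> A = B \<and> X = Y \<and> A + B = X + Y"
proof -
  define u v where "u = A + B" and "v = X + Y"
  have "0 \<le> u" "0 \<le> v" using nn by (simp_all add: u_def v_def)
  have AB_u: "4 * (A * B) \<le> u\<^sup>2" and AB_v: "4 * (A * B) \<le> v\<^sup>2"
    using four_mul_le_sq_add[of A B] four_mul_le_sq_add[of X Y] minor by (simp_all add: u_def v_def)
  have uv: "4 * (A * B) \<le> u * v"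
  proof (cases "u \<le> v")
    case True
    then show ?thesis using AB_u \<open>0 \<le> u\<close> mult_left_mono[of u v u] by (simp add: power2_eq_square)
  next
    case False
    then show ?thesis using AB_v \<open>0 \<le> v\<close> mult_right_mono[of v u v] by (simp add: power2_eq_square)
  qed
  then show "16 * (A * B) \<le> (A + B + X + Y)\<^sup>2" using four_mul_le_sq_add[of u v] by (simp add: u_def v_def add.assoc)
  assume "16 * (A * B) = (A + B + X + Y)\<^sup>2"
  then have "16 * (A * B) = (u + v)\<^sup>2" by (simp add: u_def v_def add.assoc)
  then have "u = v" "4 * (A * B) = u\<^sup>2"
    using uv four_mul_le_sq_add[of u v] four_mul_eq_sq_add_iff[of u v] by (simp_all add: power2_eq_square)
  then show "A = B \<and> X = Y \<and> A + B = X + Y"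
    using four_mul_eq_sq_add_iff[of A B] four_mul_eq_sq_add_iff[of X Y] four_mul_le_sq_add[of X Y] minor
    by (simp add: u_def v_def)
qed

lemma face_product_le:
  fixes A B X Y C D Z W :: real
  assumes nn: "0 \<le> A" "0 \<le> B" "0 \<le> X" "0 \<le> Y" "0 \<le> C" "0 \<le> D" "0 \<le> Z" "0 \<le> W"
    and total: "A + B + X + Y + C + D + Z + W = 1" and minor: "A * B \<le> X * Y"
  shows "A * B * C * D \<le> 1/1024"
    and "A * B * C * D = 1/1024 \<Longrightarrow>
      A = 1/8 \<and> B = 1/8 \<and> X = 1/8 \<and> Y = 1/8 \<and> C = 1/4 \<and> D = 1/4 \<and> Z = 0 \<and> W = 0"
proof -
  define s t where "s = A + B + X + Y" and "t = C + D + Z + W"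
  have "0 \<le> C + D" "C + D \<le> t" "0 \<le> s * t" "s + t = 1" using nn total by (simp_all add: s_def t_def)
  note AB = sixteen_mul_le_sq_sum[OF nn(1-4) minor, folded s_def]
  have CD: "4 * (C * D) \<le> t\<^sup>2"
    using four_mul_le_sq_add[of C D] power_mono[OF \<open>C + D \<le> t\<close> \<open>0 \<le> C + D\<close>, of 2] by linarith
  have "4 * (s * t) \<le> 1" using four_mul_le_sq_add[of s t] \<open>s + t = 1\<close> by simp
  then have "(s * t)\<^sup>2 \<le> (1/4)\<^sup>2" using \<open>0 \<le> s * t\<close> by (intro power_mono) simp_all
  then have st2: "s\<^sup>2 * t\<^sup>2 \<le> 1/16" by (simp add: power_mult_distrib power_divide)
  have prod: "(16 * (A * B)) * (4 * (C * D)) = 64 * (A * B * C * D)" by simp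
  have "(16 * (A * B)) * (4 * (C * D)) \<le> s\<^sup>2 * t\<^sup>2"
    using AB(1) CD nn by (intro mult_mono) simp_all
  then show "A * B * C * D \<le> 1/1024" using st2 prod by linarith
  assume "A * B * C * D = 1/1024"
  then have PQ: "(16 * (A * B)) * (4 * (C * D)) = 1/16" using prod by simp
  then have "s\<^sup>2 * t\<^sup>2 \<le> (16 * (A * B)) * (4 * (C * D))" "0 < (16 * (A * B)) * (4 * (C * D))"
    using st2 by simp_all
  moreover have "0 \<le> 16 * (A * B)" "0 \<le> 4 * (C * D)" using nn by simp_all
  ultimately have tight: "16 * (A * B) = s\<^sup>2" "4 * (C * D) = t\<^sup>2"
    using mult_mono_tight[OF _ AB(1) _ CD] by blast+
  then have "(s * t)\<^sup>2 = (1/4)\<^sup>2" using PQ by (simp add: power_mult_distrib power_divide)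
  then have "4 * (s * t) = 1" using \<open>0 \<le> s * t\<close> by (simp add: power2_eq_iff_nonneg)
  then have half: "s = 1/2" "t = 1/2"
    using four_mul_eq_sq_add_iff[of s t] \<open>s + t = 1\<close> by simp_all
  then have "A = 1/8 \<and> B = 1/8 \<and> X = 1/8 \<and> Y = 1/8"
    using AB(2)[OF tight(1)] by (simp add: s_def)
  moreover have "C + D = 1/2"
    using four_mul_le_sq_add[of C D] tight(2) half(2) \<open>C + D \<le> t\<close> \<open>0 \<le> C + D\<close>
      power_mono[of "C + D" "1/2" 2] power2_le_imp_le[of "1/2" "C + D"] by simp
  then have "C = 1/4 \<and> D = 1/4 \<and> Z = 0 \<and> W = 0"
    using four_mul_eq_sq_add_iff[of C D] tight(2) half(2) nn by (simp add: t_def)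
  ultimately show "A = 1/8 \<and> B = 1/8 \<and> X = 1/8 \<and> Y = 1/8 \<and> C = 1/4 \<and> D = 1/4 \<and> Z = 0 \<and> W = 0"
    by simp
qed

lemma distinct_cube_points_UNIV:
  assumes "distinct [x0, x1, x2, x3, x4, x5, x6, x7 :: bool \<times> bool \<times> bool]"
  shows "{x0, x1, x2, x3, x4, x5, x6, x7} = UNIV"
proof -
  have "card {x0, x1, x2, x3, x4, x5, x6, x7} = card (UNIV :: (bool \<times> bool \<times> bool) set)"
    using distinct_card[OF assms] by (simp add: UNIV_cube)
  then show ?thesis by (intro card_subset_eq) auto
qed

lemma simplex7_face_product_le:
  assumes p: "p \<in> simplex7" and xs: "distinct [x0, x1, x2, x3, x4, x5, x6, x7]"
    and minor: "p x0 * p x1 \<le> p x2 * p x3"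
  shows "p x0 * p x1 * p x4 * p x5 \<le> 1/1024"
    and "p x0 * p x1 * p x4 * p x5 = 1/1024 \<Longrightarrow> p = mix {x0, x1, x2, x3} {x4, x5}"
proof -
  have "p x0 + p x1 + p x2 + p x3 + p x4 + p x5 + p x6 + p x7 = (\<Sum>x\<in>UNIV. p x)"
    using xs by (simp flip: distinct_cube_points_UNIV[OF xs] add: add.assoc)
  then have total: "p x0 + p x1 + p x2 + p x3 + p x4 + p x5 + p x6 + p x7 = 1"
    using p by (simp add: simplex7_def)
  note face = face_product_le[OF simplex7_nonneg[OF p] simplex7_nonneg[OF p] simplex7_nonneg[OF p]
      simplex7_nonneg[OF p] simplex7_nonneg[OF p] simplex7_nonneg[OF p] simplex7_nonneg[OF p]
      simplex7_nonneg[OF p] total minor]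
  show "p x0 * p x1 * p x4 * p x5 \<le> 1/1024" by (rule face(1))
  assume "p x0 * p x1 * p x4 * p x5 = 1/1024"
  then have vals: "p x0 = 1/8" "p x1 = 1/8" "p x2 = 1/8" "p x3 = 1/8" "p x4 = 1/4" "p x5 = 1/4"
      "p x6 = 0" "p x7 = 0"
    using face(2) by simp_all
  show "p = mix {x0, x1, x2, x3} {x4, x5}"
  proof
    fix x
    have "x \<in> {x0, x1, x2, x3, x4, x5, x6, x7}" using distinct_cube_points_UNIV[OF xs] by simp
    then show "p x = mix {x0, x1, x2, x3} {x4, x5} x"
      using xs vals by (auto simp: mix_def)
  qed
qed

definition uplus_support_prod :: "tensor \<Rightarrow> real" where
  "uplus_support_prod q = q (False,False,False) * q (False,True,True) * q (True,False,True) * q (True,True,False)"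

lemma not_alternating_cases:
  assumes "\<not> alternating_dets q"
  obtains "slice_det 1 False q \<le> 0" | "0 \<le> slice_det 1 True q" | "slice_det 2 False q \<le> 0"
    | "0 \<le> slice_det 2 True q" | "slice_det 3 False q \<le> 0" | "0 \<le> slice_det 3 True q"
  using assms unfolding alternating_dets_def by force

theorem M33_uplus_support_prod:
  assumes "q \<in> M33"
  shows "uplus_support_prod q \<le> 1/1024"
    and "uplus_support_prod q = 1/1024 \<Longrightarrow> q \<in> {q10, q11, q20, q21, q30, q31}"
proof -
  from assms obtain a b c where q: "q \<in> simplex7" "q = cp3 a b c" and "nonneg_factors a b c"
    by (auto simp: M33_iff)
  then have "\<not> alternating_dets q" using cp3_not_alternating by blast
  then have "uplus_support_prod q \<le> 1/1024 \<and> (uplus_support_prod q = 1/1024 \<longrightarrow> q \<in> {q10, q11, q20, q21, q30, q31})"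
  proof (cases rule: not_alternating_cases)
    case 1
    then show ?thesis
      using simplex7_face_product_le[OF q(1), of "(False,False,False)" "(False,True,True)" "(False,False,True)"
          "(False,True,False)" "(True,False,True)" "(True,True,False)" "(True,False,False)" "(True,True,True)"]
      by (simp add: slice_det_def uplus_support_prod_def q10_def insert_commute mult_ac)
  next
    case 2
    then show ?thesis
      using simplex7_face_product_le[OF q(1), of "(True,False,True)" "(True,True,False)" "(True,False,False)"
          "(True,True,True)" "(False,False,False)" "(False,True,True)" "(False,False,True)" "(False,True,False)"]
      by (simp add: slice_det_def uplus_support_prod_def q11_def insert_commute mult_ac)
  next
    case 3
    then show ?thesis
      using simplex7_face_product_le[OF q(1), of "(False,False,False)" "(True,False,True)" "(False,False,True)"
          "(True,False,False)" "(False,True,True)" "(True,True,False)" "(False,True,False)" "(True,True,True)"]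
      by (simp add: slice_det_def uplus_support_prod_def q20_def insert_commute mult_ac)
  next
    case 4
    then show ?thesis
      using simplex7_face_product_le[OF q(1), of "(False,True,True)" "(True,True,False)" "(False,True,False)"
          "(True,True,True)" "(False,False,False)" "(True,False,True)" "(False,False,True)" "(True,False,False)"]
      by (simp add: slice_det_def uplus_support_prod_def q21_def insert_commute mult_ac)
  next
    case 5
    then show ?thesis
      using simplex7_face_product_le[OF q(1), of "(False,False,False)" "(True,True,False)" "(False,True,False)"
          "(True,False,False)" "(False,True,True)" "(True,False,True)" "(False,False,True)" "(True,True,True)"]
      by (simp add: slice_det_def uplus_support_prod_def q30_def insert_commute mult_ac)
  next
    case 6
    then show ?thesis
      using simplex7_face_product_le[OF q(1), of "(False,True,True)" "(True,False,True)" "(False,False,True)"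
          "(True,True,True)" "(False,False,False)" "(True,True,False)" "(False,True,False)" "(True,False,False)"]
      by (simp add: slice_det_def uplus_support_prod_def q31_def insert_commute mult_ac)
  qed
  then show "uplus_support_prod q \<le> 1/1024"
    and "uplus_support_prod q = 1/1024 \<Longrightarrow> q \<in> {q10, q11, q20, q21, q30, q31}" by auto
qed

lemma ln_inverse_four_mul: "0 < x \<Longrightarrow> ln (1 / (4 * x)) = - 2 * ln 2 - ln x" for x :: real
  using ln_realpow[of 2 2] by (simp add: ln_div ln_mult)

lemma KL_u_plus_pos:
  assumes "0 < q (False,False,False)" "0 < q (False,True,True)" "0 < q (True,False,True)" "0 < q (True,True,False)"
  shows "KL u_plus q = ereal (- 2 * ln 2 - ln (uplus_support_prod q) / 4)"
proof -
  have "ln (uplus_support_prod q) = ln (q (False,False,False)) + ln (q (False,True,True))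
      + ln (q (True,False,True)) + ln (q (True,True,False))"
    using assms by (simp add: uplus_support_prod_def ln_mult)
  then show ?thesis using assms unfolding KL_def ex_cube sum_cube
    by (simp add: u_plus_def ln_inverse_four_mul add_divide_distrib diff_divide_distrib)
qed

lemma KL_u_plus_infinite:
  assumes "q (False,False,False) = 0 \<or> q (False,True,True) = 0 \<or> q (True,False,True) = 0 \<or> q (True,True,False) = 0"
  shows "KL u_plus q = \<infinity>"
  using assms unfolding KL_def ex_cube by (auto simp: u_plus_def)

lemma ln_1024: "ln (1/1024 :: real) = - 10 * ln 2"
  using ln_realpow[of 2 10] by (simp add: ln_div)

theorem KL_u_plus_M33_ge:
  assumes "q \<in> M33"
  shows "ereal (ln 2 / 2) \<le> KL u_plus q"
    and "KL u_plus q = ereal (ln 2 / 2) \<Longrightarrow> q \<in> {q10, q11, q20, q21, q30, q31}"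
proof -
  have nonneg: "0 \<le> q x" for x using assms simplex7_nonneg by (simp add: M33_def)
  have "ereal (ln 2 / 2) \<le> KL u_plus q \<and> (KL u_plus q = ereal (ln 2 / 2) \<longrightarrow> q \<in> {q10, q11, q20, q21, q30, q31})"
  proof (cases "0 < q (False,False,False) \<and> 0 < q (False,True,True) \<and> 0 < q (True,False,True) \<and> 0 < q (True,True,False)")
    case True
    then have pos: "0 < uplus_support_prod q" by (simp add: uplus_support_prod_def)
    have KL: "KL u_plus q = ereal (- 2 * ln 2 - ln (uplus_support_prod q) / 4)"
      using True KL_u_plus_pos by blast
    have "ln (uplus_support_prod q) \<le> - 10 * ln 2"
      using M33_uplus_support_prod(1)[OF assms] pos ln_1024 by (metis ln_le_cancel_iff zero_less_divide_1_iff zero_less_numeral)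
    moreover have "uplus_support_prod q = 1/1024" if "ln (uplus_support_prod q) = - 10 * ln 2"
      using that pos ln_1024 by (metis ln_inj_iff zero_less_divide_1_iff zero_less_numeral)
    ultimately show ?thesis using KL M33_uplus_support_prod(2)[OF assms] by auto
  next
    case False
    then have "KL u_plus q = \<infinity>" using nonneg by (intro KL_u_plus_infinite) (auto simp: less_le)
    then show ?thesis by simp
  qed
  then show "ereal (ln 2 / 2) \<le> KL u_plus q"
    and "KL u_plus q = ereal (ln 2 / 2) \<Longrightarrow> q \<in> {q10, q11, q20, q21, q30, q31}" by auto
qed

lemma six_minimizers_simplex7: "q \<in> {q10, q11, q20, q21, q30, q31} \<Longrightarrow> q \<in> simplex7"
  by (auto simp: simplex7_def sum_cube q10_def q11_def q20_def q21_def q30_def q31_def mix_def)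

text \<open>Each minimiser is a uniform block of mass 1/2 on a face (one rank-one term) plus two point masses.\<close>
lemma six_minimizers_M33:
  assumes "q \<in> {q10, q11, q20, q21, q30, q31}"
  shows "q \<in> M33"
proof -
  define one :: "bool \<Rightarrow> real" where "one = (\<lambda>_. 1)"
  define at0 at1 :: "bool \<Rightarrow> real" where "at0 = (\<lambda>x. of_bool (\<not> x))" and "at1 = (\<lambda>x. of_bool x)"
  have factorization: "q10 = cp3 (of_three (\<lambda>i. at0 i / 8) (\<lambda>i. at1 i / 4) (\<lambda>i. at1 i / 4)) (of_three one at0 at1) (of_three one at1 at0)"
    "q11 = cp3 (of_three (\<lambda>i. at1 i / 8) (\<lambda>i. at0 i / 4) (\<lambda>i. at0 i / 4)) (of_three one at1 at0) (of_three one at1 at0)"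
    "q20 = cp3 (of_three one (\<lambda>i. at0 i / 4) (\<lambda>i. at1 i / 4)) (of_three (\<lambda>j. at0 j / 8) at1 at1) (of_three one at1 at0)"
    "q21 = cp3 (of_three one (\<lambda>i. at0 i / 4) (\<lambda>i. at1 i / 4)) (of_three (\<lambda>j. at1 j / 8) at0 at0) (of_three one at0 at1)"
    "q30 = cp3 (of_three one (\<lambda>i. at0 i / 4) (\<lambda>i. at1 i / 4)) (of_three one at1 at0) (of_three (\<lambda>k. at0 k / 8) at1 at1)"
    "q31 = cp3 (of_three one (\<lambda>i. at0 i / 4) (\<lambda>i. at1 i / 4)) (of_three one at0 at1) (of_three (\<lambda>k. at1 k / 8) at0 at0)"
    by (intro tensor_eqI; simp add: cp3_apply of_three_def one_def at0_def at1_def mix_def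
        q10_def q11_def q20_def q21_def q30_def q31_def)+
  have "0 \<le> one i" "0 \<le> at0 i" "0 \<le> at1 i" for i by (simp_all add: one_def at0_def at1_def)
  moreover have "{q10, q11, q20, q21, q30, q31} \<subseteq> simplex7" using six_minimizers_simplex7 by blast
  ultimately have "{q10, q11, q20, q21, q30, q31} \<subseteq> M33"
    unfolding factorization by (auto intro!: cp3_in_M33 simp: nonneg_factors_of_three)
  then show ?thesis using assms by blast
qed

lemma six_minimizers_KL: "q \<in> {q10, q11, q20, q21, q30, q31} \<Longrightarrow> KL u_plus q = ereal (ln 2 / 2)"
proof -
  assume q: "q \<in> {q10, q11, q20, q21, q30, q31}"
  then have "0 < q (False,False,False)" "0 < q (False,True,True)" "0 < q (True,False,True)" "0 < q (True,True,False)"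
    and "uplus_support_prod q = 1/1024"
    by (auto simp: q10_def q11_def q20_def q21_def q30_def q31_def mix_def uplus_support_prod_def)
  moreover from this(5) have "ln (uplus_support_prod q) = - 10 * ln 2" by (simp only: ln_1024)
  ultimately show ?thesis using KL_u_plus_pos by simp
qed

definition kl_term :: "real \<Rightarrow> real \<Rightarrow> real" where
  "kl_term x y = (if x = 0 then 0 else x * ln (x / y))"

lemma kl_term_self: "kl_term x x = 0"
  by (simp add: kl_term_def)

lemma kl_term_le_zero:
  assumes "0 \<le> x" "x \<le> y"
  shows "kl_term x y \<le> 0" and "kl_term x y = 0 \<Longrightarrow> x = 0 \<or> x = y"
proof -
  show "kl_term x y \<le> 0"
    using assms by (cases "x = 0") (simp_all add: kl_term_def mult_nonneg_nonpos)
  assume "kl_term x y = 0"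
  then show "x = 0 \<or> x = y" using assms by (cases "x = 0") (auto simp: kl_term_def)
qed

lemma kl_term_split:
  assumes "0 \<le> x" "x \<le> r" "x \<le> c" "x \<le> m"
  shows "kl_term x (r * c / m) = kl_term x r + x * ln (m / (2 * c)) + x * ln 2"
proof (cases "x = 0")
  case False
  then have pos: "0 < x" "0 < r" "0 < c" "0 < m" using assms by linarith+
  have factors: "0 < x / r" "0 < m / (2 * c)" using pos by simp_all
  have "x / (r * c / m) = (x / r) * (m / (2 * c)) * 2" using pos by (simp add: field_simps)
  then have "ln (x / (r * c / m)) = ln ((x / r) * (m / (2 * c))) + ln 2"
    using factors pos by (simp add: ln_mult del: times_divide_eq_right times_divide_eq_left)
  also have "\<dots> = ln (x / r) + ln (m / (2 * c)) + ln 2" using ln_mult_pos[OF factors] by simp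
  finally have "ln (x / (r * c / m)) = ln (x / r) + ln (m / (2 * c)) + ln 2" .
  then show ?thesis using False by (simp add: kl_term_def algebra_simps)
qed (simp add: kl_term_def)

lemma mul_ln_half_ratio_le:
  fixes c m :: real
  assumes "0 \<le> c" "c \<le> m"
  shows "c * ln (m / (2 * c)) \<le> m / 2 - c"
    and "0 < m \<Longrightarrow> c * ln (m / (2 * c)) = m / 2 - c \<Longrightarrow> c = m / 2"
proof -
  show "c * ln (m / (2 * c)) \<le> m / 2 - c"
  proof (cases "c = 0")
    case False
    then have pos: "0 < c" "0 < m" using assms by linarith+
    have "c * ln (m / (2 * c)) \<le> c * (m / (2 * c) - 1)"
      using pos by (intro mult_left_mono ln_le_minus_one) simp_all
    also have "\<dots> = m / 2 - c" using pos by (simp add: field_simps)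
    finally show ?thesis .
  qed (use assms in simp)
  assume m: "0 < m" and eq: "c * ln (m / (2 * c)) = m / 2 - c"
  show "c = m / 2"
  proof (cases "c = 0")
    case False
    then have pos: "0 < c" using assms by linarith
    have "c * (m / (2 * c) - 1) = m / 2 - c" using pos by (simp add: field_simps)
    then have "c * ln (m / (2 * c)) = c * (m / (2 * c) - 1)" using eq by simp
    then have "ln (m / (2 * c)) = m / (2 * c) - 1" using pos by simp
    then have "m / (2 * c) = 1" using pos m by (intro ln_eq_minus_one) simp_all
    then show ?thesis using pos by (simp add: field_simps)
  qed (use eq m in simp)
qed

text \<open>Mutual information between row and column of an unnormalised 2x2 table.\<close>
definition mutual_info2 :: "real \<Rightarrow> real \<Rightarrow> real \<Rightarrow> real \<Rightarrow> real" where
  "mutual_info2 x00 x01 x10 x11 = (let m = x00 + x01 + x10 + x11 in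
     kl_term x00 ((x00 + x01) * (x00 + x10) / m) + kl_term x01 ((x00 + x01) * (x01 + x11) / m) +
     kl_term x10 ((x10 + x11) * (x00 + x10) / m) + kl_term x11 ((x10 + x11) * (x01 + x11) / m))"

lemma mutual_info2_le:
  fixes x00 x01 x10 x11 :: real
  assumes nn: "0 \<le> x00" "0 \<le> x01" "0 \<le> x10" "0 \<le> x11"
  defines "m \<equiv> x00 + x01 + x10 + x11"
  shows "mutual_info2 x00 x01 x10 x11 \<le> m * ln 2"
    and "0 < m \<Longrightarrow> mutual_info2 x00 x01 x10 x11 = m * ln 2 \<Longrightarrow>
      (x00 = m / 2 \<and> x11 = m / 2 \<and> x01 = 0 \<and> x10 = 0) \<or> (x01 = m / 2 \<and> x10 = m / 2 \<and> x00 = 0 \<and> x11 = 0)"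
proof -
  define c0 c1 r0 r1 where "c0 = x00 + x10" and "c1 = x01 + x11" and "r0 = x00 + x01" and "r1 = x10 + x11"
  \<comment> \<open>mutual information = H(column) - H(column | row), split term by term\<close>
  have split: "mutual_info2 x00 x01 x10 x11 = (kl_term x00 r0 + kl_term x01 r0 + kl_term x10 r1 + kl_term x11 r1)
      + (c0 * ln (m / (2 * c0)) + c1 * ln (m / (2 * c1))) + m * ln 2"
  proof -
    have "mutual_info2 x00 x01 x10 x11 =
        (kl_term x00 r0 + x00 * ln (m / (2 * c0)) + x00 * ln 2) + (kl_term x01 r0 + x01 * ln (m / (2 * c1)) + x01 * ln 2)
      + (kl_term x10 r1 + x10 * ln (m / (2 * c0)) + x10 * ln 2) + (kl_term x11 r1 + x11 * ln (m / (2 * c1)) + x11 * ln 2)"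
      unfolding mutual_info2_def Let_def m_def[symmetric] c0_def c1_def r0_def r1_def
      using nn by (subst kl_term_split, simp_all add: m_def)+
    then show ?thesis by (simp add: c0_def c1_def m_def algebra_simps)
  qed
  have rows: "kl_term x00 r0 \<le> 0" "kl_term x01 r0 \<le> 0" "kl_term x10 r1 \<le> 0" "kl_term x11 r1 \<le> 0"
    using nn kl_term_le_zero(1) by (simp_all add: r0_def r1_def)
  have cols: "c0 * ln (m / (2 * c0)) \<le> m / 2 - c0" "c1 * ln (m / (2 * c1)) \<le> m / 2 - c1"
    using nn by (intro mul_ln_half_ratio_le(1); simp add: c0_def c1_def m_def)+
  have m: "m = c0 + c1" by (simp add: m_def c0_def c1_def)
  show "mutual_info2 x00 x01 x10 x11 \<le> m * ln 2" using split rows cols m by linarith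
  assume "0 < m" and eq: "mutual_info2 x00 x01 x10 x11 = m * ln 2"
  have "kl_term x00 r0 = 0" "kl_term x01 r0 = 0" "kl_term x10 r1 = 0" "kl_term x11 r1 = 0"
    and "c0 * ln (m / (2 * c0)) = m / 2 - c0" "c1 * ln (m / (2 * c1)) = m / 2 - c1"
    using split rows cols m eq by linarith+
  then have "c0 = m / 2" "c1 = m / 2"
    and "x00 = 0 \<or> x00 = r0" "x01 = 0 \<or> x01 = r0" "x10 = 0 \<or> x10 = r1" "x11 = 0 \<or> x11 = r1"
    using mul_ln_half_ratio_le(2)[OF _ _ \<open>0 < m\<close>, of c0] mul_ln_half_ratio_le(2)[OF _ _ \<open>0 < m\<close>, of c1]
      kl_term_le_zero(2)[of x00 r0] kl_term_le_zero(2)[of x01 r0] kl_term_le_zero(2)[of x10 r1]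
      kl_term_le_zero(2)[of x11 r1] nn
    by (simp_all add: c0_def c1_def r0_def r1_def m_def)
  then show "(x00 = m / 2 \<and> x11 = m / 2 \<and> x01 = 0 \<and> x10 = 0) \<or> (x01 = m / 2 \<and> x10 = m / 2 \<and> x00 = 0 \<and> x11 = 0)"
    using \<open>0 < m\<close> unfolding c0_def c1_def r0_def r1_def by (smt (verit) field_sum_of_halves)
qed

definition slice_mass :: "tensor \<Rightarrow> bool \<Rightarrow> real" where
  "slice_mass p i0 = p (i0,False,False) + p (i0,False,True) + p (i0,True,False) + p (i0,True,True)"

definition slice_indep :: "tensor \<Rightarrow> bool \<Rightarrow> tensor" where
  "slice_indep p i0 = (\<lambda>(i, j, k). if i = i0
     then (p (i0,j,False) + p (i0,j,True)) * (p (i0,False,k) + p (i0,True,k)) / slice_mass p i0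
     else p (i, j, k))"

lemma slice_indep_simplex7:
  assumes p: "p \<in> simplex7"
  shows "slice_indep p i0 \<in> simplex7"
proof -
  note nn = simplex7_nonneg[OF p]
  have "0 \<le> slice_indep p i0 x" for x
    using nn by (cases x) (simp add: slice_indep_def slice_mass_def)
  moreover
  have "(\<Sum>x\<in>UNIV. slice_indep p i0 x) - (\<Sum>x\<in>UNIV. p x) =
      ((p (i0,False,False) + p (i0,False,True) + p (i0,True,False) + p (i0,True,True))\<^sup>2 / slice_mass p i0
       - slice_mass p i0)"
    by (cases i0) (simp_all add: sum_cube slice_indep_def slice_mass_def power2_eq_square add_divide_distrib[symmetric] algebra_simps)
  then have "(\<Sum>x\<in>UNIV. slice_indep p i0 x) = (\<Sum>x\<in>UNIV. p x)"
    by (cases "slice_mass p i0 = 0") (simp_all add: slice_mass_def power2_eq_square)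
  ultimately show ?thesis using p by (simp add: simplex7_def)
qed

text \<open>One rank-one term for the new slice, one for each row of the other slice.\<close>
lemma slice_indep_M33:
  assumes p: "p \<in> simplex7"
  shows "slice_indep p i0 \<in> M33"
proof -
  define ind :: "bool \<Rightarrow> bool \<Rightarrow> real" where "ind v = (\<lambda>x. of_bool (x = v))" for v
  have factorization: "slice_indep p i0 = cp3 (of_three (ind i0) (ind (\<not> i0)) (ind (\<not> i0)))
      (of_three (\<lambda>j. p (i0,j,False) + p (i0,j,True)) (ind False) (ind True))
      (of_three (\<lambda>k. (p (i0,False,k) + p (i0,True,k)) / slice_mass p i0) (\<lambda>k. p (\<not> i0,False,k)) (\<lambda>k. p (\<not> i0,True,k)))"
    by (intro tensor_eqI; cases i0) (simp_all add: cp3_apply of_three_def ind_def slice_indep_def)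
  have "0 \<le> slice_mass p i0" using simplex7_nonneg[OF p] by (simp add: slice_mass_def)
  then show ?thesis
    using slice_indep_simplex7[OF p, of i0] simplex7_nonneg[OF p] unfolding factorization
    by (auto intro!: cp3_in_M33 simp: nonneg_factors_of_three ind_def)
qed

lemma KL_slice_indep:
  assumes p: "p \<in> simplex7"
  shows "KL p (slice_indep p i0) =
    ereal (mutual_info2 (p (i0,False,False)) (p (i0,False,True)) (p (i0,True,False)) (p (i0,True,True)))"
proof -
  note nn = simplex7_nonneg[OF p]
  have "0 < slice_indep p i0 x" if "0 < p x" for x
  proof -
    obtain i j k where x: "x = (i, j, k)" by (cases x)
    have "p (i, j, k) \<le> p (i,j,False) + p (i,j,True)" "p (i, j, k) \<le> p (i,False,k) + p (i,True,k)"
      "p (i,j,False) + p (i,j,True) \<le> slice_mass p i"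
      using nn by (cases j; cases k; simp add: slice_mass_def)+
    then have "0 < p (i,j,False) + p (i,j,True)" "0 < p (i,False,k) + p (i,True,k)" "0 < slice_mass p i"
      using that unfolding x by linarith+
    then show ?thesis using that x by (cases "i = i0") (auto simp: slice_indep_def)
  qed
  then have "\<not> (\<exists>x. 0 < p x \<and> slice_indep p i0 x = 0)" by fastforce
  then have "KL p (slice_indep p i0) = ereal (\<Sum>x\<in>UNIV. kl_term (p x) (slice_indep p i0 x))"
    unfolding KL_def kl_term_def by simp
  also have "(\<Sum>x\<in>UNIV. kl_term (p x) (slice_indep p i0 x)) =
      mutual_info2 (p (i0,False,False)) (p (i0,False,True)) (p (i0,True,False)) (p (i0,True,True))"
    unfolding sum_cube mutual_info2_def
    by (cases i0) (simp_all add: slice_indep_def slice_mass_def kl_term_self Let_def add_ac)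
  finally show ?thesis .
qed

lemma KL_self: "KL p p = 0"
  by (simp add: KL_def sum.neutral)

lemma KL_model_le: "q \<in> M33 \<Longrightarrow> KL_model p \<le> KL p q"
  unfolding KL_model_def by (rule INF_lower)

lemma M33_if_first_index_irrelevant:
  assumes p: "p \<in> simplex7"
    and same: "p (True,False,False) = p (False,False,False)" "p (True,False,True) = p (False,False,True)"
      "p (True,True,False) = p (False,True,False)" "p (True,True,True) = p (False,True,True)"
  shows "p \<in> M33"
proof -
  define ind :: "bool \<Rightarrow> bool \<Rightarrow> real" where "ind v = (\<lambda>x. of_bool (x = v))" for v
  have eq: "p = cp3 (of_three (\<lambda>_. 1) (\<lambda>_. 1) (\<lambda>_. 0)) (of_three (ind False) (ind True) (\<lambda>_. 0))
      (of_three (\<lambda>k. p (False,False,k)) (\<lambda>k. p (False,True,k)) (\<lambda>_. 0))"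
    (is "p = ?q")
    by (intro tensor_eqI) (simp_all add: cp3_apply of_three_def ind_def same)
  have "?q \<in> M33"
  proof (rule cp3_in_M33)
    show "?q \<in> simplex7" by (simp only: eq[symmetric] p)
    show "nonneg_factors (of_three (\<lambda>_. 1) (\<lambda>_. 1) (\<lambda>_. 0)) (of_three (ind False) (ind True) (\<lambda>_. 0))
      (of_three (\<lambda>k. p (False,False,k)) (\<lambda>k. p (False,True,k)) (\<lambda>_. 0))"
      using simplex7_nonneg[OF p] by (simp add: nonneg_factors_of_three ind_def)
  qed
  then show ?thesis by (simp only: eq[symmetric])
qed

lemma KL_model_le_slice_mass:
  assumes p: "p \<in> simplex7"
  shows "KL_model p \<le> ereal (slice_mass p i * ln 2)"
    and "KL_model p = ereal (slice_mass p i * ln 2) \<Longrightarrow> 0 < slice_mass p i \<Longrightarrow>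
      (p (i,False,False) = slice_mass p i / 2 \<and> p (i,True,True) = slice_mass p i / 2 \<and>
        p (i,False,True) = 0 \<and> p (i,True,False) = 0) \<or>
      (p (i,False,True) = slice_mass p i / 2 \<and> p (i,True,False) = slice_mass p i / 2 \<and>
        p (i,False,False) = 0 \<and> p (i,True,True) = 0)"
proof -
  note nn = simplex7_nonneg[OF p]
  define I where "I = mutual_info2 (p (i,False,False)) (p (i,False,True)) (p (i,True,False)) (p (i,True,True))"
  have model_le: "KL_model p \<le> ereal I"
    using KL_model_le[OF slice_indep_M33[OF p, of i], of p] KL_slice_indep[OF p, of i] by (simp add: I_def)
  have I_le: "I \<le> slice_mass p i * ln 2"
    using mutual_info2_le(1) nn by (simp add: I_def slice_mass_def)
  then show "KL_model p \<le> ereal (slice_mass p i * ln 2)" using model_le by (meson ereal_less_eq(3) order_trans)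
  assume "KL_model p = ereal (slice_mass p i * ln 2)" and "0 < slice_mass p i"
  then have "I = slice_mass p i * ln 2" using model_le I_le by simp
  then show "(p (i,False,False) = slice_mass p i / 2 \<and> p (i,True,True) = slice_mass p i / 2 \<and>
        p (i,False,True) = 0 \<and> p (i,True,False) = 0) \<or>
      (p (i,False,True) = slice_mass p i / 2 \<and> p (i,True,False) = slice_mass p i / 2 \<and>
        p (i,False,False) = 0 \<and> p (i,True,True) = 0)"
    using mutual_info2_le(2)[OF nn nn nn nn] \<open>0 < slice_mass p i\<close> by (simp add: I_def slice_mass_def)
qed

lemma correlated_slices_cases:
  assumes p: "p \<in> simplex7" and "p \<notin> M33"
    and slices: "\<And>i. (p (i,False,False) = 1/4 \<and> p (i,True,True) = 1/4 \<and> p (i,False,True) = 0 \<and> p (i,True,False) = 0) \<or>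
      (p (i,False,True) = 1/4 \<and> p (i,True,False) = 1/4 \<and> p (i,False,False) = 0 \<and> p (i,True,True) = 0)"
  shows "p = u_plus \<or> p = u_minus"
  using slices[of False] slices[of True]
proof (elim disjE conjE)
  assume "p (False,False,False) = 1/4" "p (False,True,True) = 1/4" "p (False,False,True) = 0"
    "p (False,True,False) = 0" "p (True,False,False) = 1/4" "p (True,True,True) = 1/4"
    "p (True,False,True) = 0" "p (True,True,False) = 0"
  then show ?thesis using M33_if_first_index_irrelevant[OF p] \<open>p \<notin> M33\<close> by simp
next
  assume "p (False,False,False) = 1/4" "p (False,True,True) = 1/4" "p (False,False,True) = 0"
    "p (False,True,False) = 0" "p (True,False,True) = 1/4" "p (True,True,False) = 1/4"
    "p (True,False,False) = 0" "p (True,True,True) = 0"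
  then show ?thesis by (simp add: tensor_eqI u_plus_def)
next
  assume "p (False,False,True) = 1/4" "p (False,True,False) = 1/4" "p (False,False,False) = 0"
    "p (False,True,True) = 0" "p (True,False,False) = 1/4" "p (True,True,True) = 1/4"
    "p (True,False,True) = 0" "p (True,True,False) = 0"
  then show ?thesis by (simp add: tensor_eqI u_minus_def)
next
  assume "p (False,False,True) = 1/4" "p (False,True,False) = 1/4" "p (False,False,False) = 0"
    "p (False,True,True) = 0" "p (True,False,True) = 1/4" "p (True,True,False) = 1/4"
    "p (True,False,False) = 0" "p (True,True,True) = 0"
  then show ?thesis using M33_if_first_index_irrelevant[OF p] \<open>p \<notin> M33\<close> by simp
qed

theorem KL_model_le_half_ln2:
  assumes p: "p \<in> simplex7"
  shows "KL_model p \<le> ereal (ln 2 / 2)"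
    and "KL_model p = ereal (ln 2 / 2) \<Longrightarrow> p = u_plus \<or> p = u_minus"
proof -
  have masses: "slice_mass p False + slice_mass p True = 1"
    using simplex7_sum[OF p] by (simp add: slice_mass_def algebra_simps)
  obtain i where "slice_mass p i \<le> 1/2"
    using masses by (cases "slice_mass p False \<le> 1/2") (auto intro: that[of False] that[of True])
  then have "slice_mass p i * ln 2 \<le> 1/2 * ln 2" by (intro mult_right_mono) simp_all
  then show "KL_model p \<le> ereal (ln 2 / 2)"
    using KL_model_le_slice_mass(1)[OF p, of i] by (simp add: order_trans)
  assume eq: "KL_model p = ereal (ln 2 / 2)"
  then have "1/2 * ln 2 \<le> slice_mass p i * ln 2" for i
    using KL_model_le_slice_mass(1)[OF p, of i] by simp
  then have "slice_mass p False = 1/2" "slice_mass p True = 1/2"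
    using masses by (simp_all add: mult_le_cancel_right_pos) (smt (verit))+
  then have half: "slice_mass p i = 1/2" for i by (cases i) simp_all
  have "(p (i,False,False) = 1/4 \<and> p (i,True,True) = 1/4 \<and> p (i,False,True) = 0 \<and> p (i,True,False) = 0) \<or>
      (p (i,False,True) = 1/4 \<and> p (i,True,False) = 1/4 \<and> p (i,False,False) = 0 \<and> p (i,True,True) = 0)" for i
    using KL_model_le_slice_mass(2)[OF p, of i] eq unfolding half by simp
  moreover have "p \<notin> M33"
    using KL_model_le[of p p] KL_self[of p] eq by force
  ultimately show "p = u_plus \<or> p = u_minus" using correlated_slices_cases[OF p] by blast
qed

lemma flip1_flip1 [simp]: "flip1 (flip1 q) = q"
  by (simp add: flip1_def fun_eq_iff)

lemma flip1_cp3: "flip1 (cp3 a b c) = cp3 (flip_bool a) b c"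
  by (simp add: flip1_def cp3_def flip_bool_def fun_eq_iff)

lemma flip1_M33: "q \<in> M33 \<Longrightarrow> flip1 q \<in> M33"
proof -
  assume "q \<in> M33"
  then obtain a b c where q: "q \<in> simplex7" "nonneg_factors a b c" "q = cp3 a b c" by (auto simp: M33_iff)
  have "flip1 q \<in> simplex7" using q(1)
    unfolding simplex7_def sum_cube by (auto simp: flip1_def algebra_simps)
  then have "cp3 (flip_bool a) b c \<in> M33"
    using q by (intro cp3_in_M33) (simp_all add: flip1_cp3 nonneg_factors_def flip_bool_def)
  then show ?thesis by (simp add: q(3) flip1_cp3)
qed

lemma KL_u_minus: "KL u_minus q = KL u_plus (flip1 q)"
  unfolding KL_def ex_cube sum_cube by (simp add: u_minus_def u_plus_def flip1_def algebra_simps)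

lemma KL_model_u_plus: "KL_model u_plus = ereal (ln 2 / 2)"
proof (rule antisym)
  show "KL_model u_plus \<le> ereal (ln 2 / 2)"
    using KL_model_le[OF six_minimizers_M33] six_minimizers_KL by (metis insertI1)
  show "ereal (ln 2 / 2) \<le> KL_model u_plus"
    unfolding KL_model_def using KL_u_plus_M33_ge(1) by (rule INF_greatest)
qed

lemma KL_model_u_minus: "KL_model u_minus = ereal (ln 2 / 2)"
proof -
  have "KL_model u_minus = (INF q\<in>flip1 ` M33. KL u_plus q)"
    unfolding KL_model_def KL_u_minus image_image ..
  also have "flip1 ` M33 = M33"
  proof
    show "flip1 ` M33 \<subseteq> M33" using flip1_M33 by blast
    show "M33 \<subseteq> flip1 ` M33" using flip1_M33 by (metis flip1_flip1 imageI subsetI)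
  qed
  finally show ?thesis using KL_model_u_plus by (simp add: KL_model_def)
qed

lemma u_plus_simplex7: "u_plus \<in> simplex7"
  by (simp add: simplex7_def sum_cube u_plus_def)

lemma u_minus_simplex7: "u_minus \<in> simplex7"
  by (simp add: simplex7_def sum_cube u_minus_def)

lemma minimizers_u_plus: "{q \<in> M33. KL u_plus q = KL_model u_plus} = {q10, q11, q20, q21, q30, q31}"
  unfolding KL_model_u_plus using KL_u_plus_M33_ge(2) six_minimizers_M33 six_minimizers_KL by blast

lemma minimizers_u_minus: "{q \<in> M33. KL u_minus q = KL_model u_minus} = flip1 ` {q10, q11, q20, q21, q30, q31}"
  unfolding minimizers_u_plus[symmetric] KL_model_u_minus KL_model_u_plus KL_u_minus
  by (auto simp: image_iff intro: flip1_M33) (metis flip1_M33 flip1_flip1)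

lemma minimizers_slice_dets:
  "slice_det 1 False q10 = 0" "slice_det 1 True q11 = 0" "slice_det 2 False q20 = 0"
  "slice_det 2 True q21 = 0" "slice_det 3 False q30 = 0" "slice_det 3 True q31 = 0"
  by (simp_all add: slice_det_def q10_def q11_def q20_def q21_def q30_def q31_def mix_def)

theorem mainTheorem15:
  shows "(\<forall>p\<in>simplex7. KL_model p \<le> ereal (ln 2 / 2))
    \<and> {p \<in> simplex7. KL_model p = ereal (ln 2 / 2)} = {u_plus, u_minus}
    \<and> {q \<in> M33. KL u_plus q = KL_model u_plus} = {q10, q11, q20, q21, q30, q31}
    \<and> slice_det 1 False q10 = 0 \<and> slice_det 1 True q11 = 0
    \<and> slice_det 2 False q20 = 0 \<and> slice_det 2 True q21 = 0
    \<and> slice_det 3 False q30 = 0 \<and> slice_det 3 True q31 = 0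
    \<and> {q \<in> M33. KL u_minus q = KL_model u_minus} = flip1 ` {q10, q11, q20, q21, q30, q31}"
proof (intro conjI minimizers_u_plus minimizers_u_minus minimizers_slice_dets)
  show "\<forall>p\<in>simplex7. KL_model p \<le> ereal (ln 2 / 2)"
    using KL_model_le_half_ln2(1) by blast
  show "{p \<in> simplex7. KL_model p = ereal (ln 2 / 2)} = {u_plus, u_minus}"
    using KL_model_le_half_ln2(2) KL_model_u_plus KL_model_u_minus u_plus_simplex7 u_minus_simplex7 by blast
qed

end
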